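(* Consider the WBDF4 coefficients $(a_0,\dots,a_3)=\big(\tfrac{22\alpha+3}{12},\tfrac{13-36\alpha}{12},\tfrac{18\alpha-5}{12},\tfrac{1-4\alpha}{12}\big)$, $(b_0,\dots,b_4)=(\alpha,1-\alpha,0,0,0)$, $(c_0,\dots,c_3)=(3\alpha+1,-6\alpha,4\alpha,-\alpha)$. For $\alpha\ge1$, $$\sigma_{\mathrm{F}}\ge1,\quad\sigma_{\mathrm{E}}\ge\frac{3(14\alpha+1)}{4(5\alpha-1)},\quad\lambda_{\mathrm{I}}\le\frac{3(2\alpha-1)}{4(5\alpha-1)},\quad\mathfrak{I}_{\mathrm{IE}}\le\frac{2\alpha-1}{14\alpha+1};$$ and for $\alpha\ge6/5$ all four relations hold with equality.
   Context: For coefficient vectors $(a_j)_{j=0}^{\mathrm{k}-1}$, $(b_j)_{j=0}^{\mathrm{k}}$, $(c_j)_{j=0}^{\mathrm{k}-1}$ define $a(\theta)=\sum_j a_je^{\imath j\theta}$, $b(\theta)=\sum_j b_je^{\imath j\theta}$, $c(\theta)=\sum_jc_je^{\imath j\theta}$ and $\sigma_{\mathrm{F}}=\max_{\theta\in[0,2\pi)}|1/a(\theta)|$, $\sigma_{\mathrm{E}}=\max_{\theta\in[0,2\pi)}|c(\theta)/a(\theta)|$, $\lambda_{\mathrm{I}}=\min_{\theta\in[0,2\pi)}\Re[b(\theta)/a(\theta)]$, $\mathfrak{I}_{\mathrm{IE}}=\lambda_{\mathrm{I}}/\sigma_{\mathrm{E}}$. Here $\mathrm{k}=4$. *)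

theory Defs
  imports "HOL-Analysis.Analysis"
begin

definition trig_poly :: "nat \<Rightarrow> (nat \<Rightarrow> real) \<Rightarrow> real \<Rightarrow> complex" where
  "trig_poly n coef \<theta> = (\<Sum>j<n. complex_of_real (coef j) * exp (\<i> * of_nat j * complex_of_real \<theta>))"

definition kk :: nat where "kk = 4"

definition a_fun :: "(nat \<Rightarrow> real) \<Rightarrow> real \<Rightarrow> complex" where
  "a_fun a = trig_poly kk a"
definition b_fun :: "(nat \<Rightarrow> real) \<Rightarrow> real \<Rightarrow> complex" where
  "b_fun b = trig_poly (kk + 1) b"
definition c_fun :: "(nat \<Rightarrow> real) \<Rightarrow> real \<Rightarrow> complex" where
  "c_fun c = trig_poly kk c"

definition sigma_F :: "(nat \<Rightarrow> real) \<Rightarrow> real" where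
  "sigma_F a = (SUP \<theta>\<in>{0..<2*pi}. norm (1 / a_fun a \<theta>))"

definition sigma_E :: "(nat \<Rightarrow> real) \<Rightarrow> (nat \<Rightarrow> real) \<Rightarrow> real" where
  "sigma_E a c = (SUP \<theta>\<in>{0..<2*pi}. norm (c_fun c \<theta> / a_fun a \<theta>))"

definition lambda_I :: "(nat \<Rightarrow> real) \<Rightarrow> (nat \<Rightarrow> real) \<Rightarrow> real" where
  "lambda_I a b = (INF \<theta>\<in>{0..<2*pi}. Re (b_fun b \<theta> / a_fun a \<theta>))"

definition I_IE :: "(nat \<Rightarrow> real) \<Rightarrow> (nat \<Rightarrow> real) \<Rightarrow> (nat \<Rightarrow> real) \<Rightarrow> real" where
  "I_IE a b c = lambda_I a b / sigma_E a c"

text \<open>WBDF4 coefficients (entries beyond the stated indices are irrelevant; set to 0).\<close>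
definition wbdf4_a :: "real \<Rightarrow> nat \<Rightarrow> real" where
  "wbdf4_a \<alpha> j = (if j = 0 then (22*\<alpha>+3)/12 else if j = 1 then (13-36*\<alpha>)/12
     else if j = 2 then (18*\<alpha>-5)/12 else if j = 3 then (1-4*\<alpha>)/12 else 0)"
definition wbdf4_b :: "real \<Rightarrow> nat \<Rightarrow> real" where
  "wbdf4_b \<alpha> j = (if j = 0 then \<alpha> else if j = 1 then 1-\<alpha> else 0)"
definition wbdf4_c :: "real \<Rightarrow> nat \<Rightarrow> real" where
  "wbdf4_c \<alpha> j = (if j = 0 then 3*\<alpha>+1 else if j = 1 then -6*\<alpha>
     else if j = 2 then 4*\<alpha> else if j = 3 then -\<alpha> else 0)"

end

theory Submission
  imports Defs
begin

text \<open>Put \<open>x = cos \<theta>\<close>. The real and imaginary parts of a cubic trigonometric polynomial are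
  \<open>p(x)\<close> and \<open>q(x) sin \<theta>\<close>, so \<open>|a|\<^sup>2\<close>, \<open>|c|\<^sup>2\<close> and \<open>Re (b cnj a)\<close> are polynomials in
  \<open>x \<in> [-1, 1]\<close>. At \<open>\<theta> = 0\<close> the symbol \<open>a\<close> equals 1, and at \<open>\<theta> = \<pi>\<close> all symbols are real:
  \<open>a = 4(5\<alpha> - 1)/3\<close>, \<open>b = 2\<alpha> - 1\<close>, \<open>c = 14\<alpha> + 1\<close>; evaluating there gives the one-sided bounds.
  A polynomial certificate shows \<open>|a| \<ge> 1\<close> for \<open>\<alpha> \<ge> 1\<close>, which yields \<open>\<sigma>\<^sub>F = 1\<close> and the
  boundedness needed for the supremum and infimum. For \<open>\<alpha> \<ge> 6/5\<close> two further certificates show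
  that \<open>\<theta> = \<pi>\<close> maximises \<open>|c/a|\<close> and minimises \<open>Re (b/a)\<close>.\<close>

lemma trig_poly_cis: "trig_poly n f \<theta> = (\<Sum>j<n. of_real (f j) * cis \<theta> ^ j)"
proof -
  have "exp (\<i> * of_nat j * complex_of_real \<theta>) = cis \<theta> ^ j" for j
    by (simp add: cis_conv_exp exp_of_nat_mult[symmetric] algebra_simps)
  then show ?thesis unfolding trig_poly_def by simp
qed

lemma trig_poly_Suc_eq:
  assumes "f n = 0" shows "trig_poly (Suc n) f = trig_poly n f"
  using assms by (simp add: trig_poly_def fun_eq_iff)

lemma norm_trig_poly_le: "cmod (trig_poly n f \<theta>) \<le> (\<Sum>j<n. \<bar>f j\<bar>)"
proof -
  have "cmod (trig_poly n f \<theta>) \<le> (\<Sum>j<n. cmod (of_real (f j) * cis \<theta> ^ j))"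
    unfolding trig_poly_cis by (rule norm_sum)
  also have "\<dots> = (\<Sum>j<n. \<bar>f j\<bar>)"
    by (simp add: norm_mult norm_power)
  finally show ?thesis .
qed

lemma sigma_E_ge_at:
  assumes m: "0 < m" "\<And>\<theta>. m \<le> cmod (a_fun a \<theta>)" and \<theta>\<^sub>0: "\<theta>\<^sub>0 \<in> {0..<2*pi}"
  shows "cmod (c_fun c \<theta>\<^sub>0 / a_fun a \<theta>\<^sub>0) \<le> sigma_E a c"
  unfolding sigma_E_def
proof (rule cSUP_upper[OF \<theta>\<^sub>0], rule bdd_aboveI2)
  fix \<theta>
  show "cmod (c_fun c \<theta> / a_fun a \<theta>) \<le> (\<Sum>j<kk. \<bar>c j\<bar>) / m"
    unfolding norm_divide c_fun_def
    using norm_trig_poly_le[of kk c \<theta>] m by (intro frac_le) auto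
qed

lemma lambda_I_le_at:
  assumes m: "0 < m" "\<And>\<theta>. m \<le> cmod (a_fun a \<theta>)" and \<theta>\<^sub>0: "\<theta>\<^sub>0 \<in> {0..<2*pi}"
  shows "lambda_I a b \<le> Re (b_fun b \<theta>\<^sub>0 / a_fun a \<theta>\<^sub>0)"
  unfolding lambda_I_def
proof (rule cINF_lower[OF bdd_belowI2 \<theta>\<^sub>0])
  fix \<theta>
  have "cmod (b_fun b \<theta> / a_fun a \<theta>) \<le> (\<Sum>j<kk+1. \<bar>b j\<bar>) / m"
    unfolding norm_divide b_fun_def
    using norm_trig_poly_le[of "kk+1" b \<theta>] m by (intro frac_le) auto
  then show "- ((\<Sum>j<kk+1. \<bar>b j\<bar>) / m) \<le> Re (b_fun b \<theta> / a_fun a \<theta>)"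
    using abs_Re_le_cmod[of "b_fun b \<theta> / a_fun a \<theta>"] by linarith
qed

lemma divide_le_divide_of_bounds:
  fixes l L s S :: real
  assumes "l \<le> L" "0 \<le> L" "0 < S" "S \<le> s"
  shows "l / s \<le> L / S"
proof (cases "l \<le> 0")
  case True
  then show ?thesis using divide_nonpos_pos[of l s] divide_nonneg_pos[of L S] assms by linarith
next
  case False
  then show ?thesis using assms by (intro frac_le) auto
qed

text \<open>For \<open>x = cos \<theta>\<close>: \<open>cos 2\<theta> = 2x\<^sup>2 - 1\<close>, \<open>cos 3\<theta> = 4x\<^sup>3 - 3x\<close>,
  \<open>sin 2\<theta> = 2x sin \<theta>\<close>, \<open>sin 3\<theta> = (4x\<^sup>2 - 1) sin \<theta>\<close>.\<close>

definition trig4_re :: "(nat \<Rightarrow> real) \<Rightarrow> real \<Rightarrow> real" where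
  "trig4_re f x = f 0 + f 1 * x + f 2 * (2 * x^2 - 1) + f 3 * (4 * x^3 - 3 * x)"

definition trig4_im :: "(nat \<Rightarrow> real) \<Rightarrow> real \<Rightarrow> real" where
  "trig4_im f x = f 1 + f 2 * 2 * x + f 3 * (4 * x^2 - 1)"

lemma Re_Im_trig_poly_4:
  "Re (trig_poly 4 f \<theta>) = trig4_re f (cos \<theta>)"
  "Im (trig_poly 4 f \<theta>) = sin \<theta> * trig4_im f (cos \<theta>)"
proof -
  have sin_sq: "sin \<theta> ^ 2 = 1 - cos \<theta> ^ 2" by (simp add: sin_squared_eq)
  show "Re (trig_poly 4 f \<theta>) = trig4_re f (cos \<theta>)"
    unfolding trig_poly_cis trig4_re_def
    by (simp add: eval_nat_numeral power2_eq_square power3_eq_cube) (use sin_sq in algebra)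
  show "Im (trig_poly 4 f \<theta>) = sin \<theta> * trig4_im f (cos \<theta>)"
    unfolding trig_poly_cis trig4_im_def
    by (simp add: eval_nat_numeral power2_eq_square power3_eq_cube) (use sin_sq in algebra)
qed

definition trig4_sqnorm :: "(nat \<Rightarrow> real) \<Rightarrow> real \<Rightarrow> real" where
  "trig4_sqnorm f x = trig4_re f x ^ 2 + (1 - x^2) * trig4_im f x ^ 2"

definition trig4_re_mult_cnj :: "(nat \<Rightarrow> real) \<Rightarrow> (nat \<Rightarrow> real) \<Rightarrow> real \<Rightarrow> real" where
  "trig4_re_mult_cnj g f x = trig4_re g x * trig4_re f x + (1 - x^2) * trig4_im g x * trig4_im f x"

lemma norm_trig_poly_4_sq: "cmod (trig_poly 4 f \<theta>) ^ 2 = trig4_sqnorm f (cos \<theta>)"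
  by (simp add: cmod_power2 Re_Im_trig_poly_4 trig4_sqnorm_def power_mult_distrib sin_squared_eq)

lemma Re_trig_poly_4_divide:
  "Re (trig_poly 4 g \<theta> / trig_poly 4 f \<theta>) = trig4_re_mult_cnj g f (cos \<theta>) / trig4_sqnorm f (cos \<theta>)"
proof -
  have "sin \<theta> * trig4_im g (cos \<theta>) * (sin \<theta> * trig4_im f (cos \<theta>))
      = (1 - cos \<theta> ^ 2) * trig4_im g (cos \<theta>) * trig4_im f (cos \<theta>)"
    using sin_squared_eq[of \<theta>] by algebra
  then show ?thesis
    unfolding Re_divide norm_trig_poly_4_sq[symmetric] cmod_power2[symmetric]
    by (simp add: Re_Im_trig_poly_4 trig4_re_mult_cnj_def)
qed

lemma wbdf4_a_re_im:
  "trig4_re (wbdf4_a \<alpha>) x = ((22*\<alpha>+3) + (13-36*\<alpha>) * x + (18*\<alpha>-5) * (2*x^2-1) + (1-4*\<alpha>) * (4*x^3-3*x)) / 12"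
  "trig4_im (wbdf4_a \<alpha>) x = ((13-36*\<alpha>) + 2*(18*\<alpha>-5) * x + (1-4*\<alpha>) * (4*x^2-1)) / 12"
  by (simp_all add: trig4_re_def trig4_im_def wbdf4_a_def add_divide_distrib)

lemma wbdf4_b_re_im:
  "trig4_re (wbdf4_b \<alpha>) x = \<alpha> + (1-\<alpha>) * x"
  "trig4_im (wbdf4_b \<alpha>) x = 1 - \<alpha>"
  by (simp_all add: trig4_re_def trig4_im_def wbdf4_b_def)

lemma wbdf4_c_re_im:
  "trig4_re (wbdf4_c \<alpha>) x = (3*\<alpha>+1) - 6*\<alpha>*x + 4*\<alpha>*(2*x^2-1) - \<alpha>*(4*x^3-3*x)"
  "trig4_im (wbdf4_c \<alpha>) x = -6*\<alpha> + 8*\<alpha>*x - \<alpha>*(4*x^2-1)"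
  by (simp_all add: trig4_re_def trig4_im_def wbdf4_c_def)

text \<open>Each certificate writes the difference as \<open>u\<close> or \<open>v\<close> times a visibly nonnegative
  quadratic form in \<open>u = 1 - x \<ge> 0\<close> and \<open>v = 1 + x \<ge> 0\<close>, with coefficients that are
  polynomials with nonnegative coefficients in \<open>t = \<alpha> - 1\<close> resp. \<open>t = \<alpha> - 6/5\<close>.\<close>

lemma wbdf4_a_sqnorm_ge_1:
  assumes "1 \<le> \<alpha>" "-1 \<le> x" "x \<le> 1"
  shows "1 \<le> trig4_sqnorm (wbdf4_a \<alpha>) x"
proof -
  define t where "t = \<alpha> - 1"
  define u where "u = 1 - x"
  define v where "v = 1 + x"
  define E where "E = 3*(v-25/3*u)^2+116/3*u^2+18*((320/9*t+200/9*t^2)*u^2+2*(t/3+7/3*t^2)*u * v+(2*t+2*t^2) * v^2)"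
  have \<alpha>: "\<alpha> = 1 + t" unfolding t_def by simp
  have eq: "trig4_sqnorm (wbdf4_a \<alpha>) x - 1 = u * E / 72"
    unfolding E_def u_def v_def trig4_sqnorm_def wbdf4_a_re_im \<alpha> by algebra
  have "0 \<le> E" unfolding E_def using assms t_def u_def v_def
    by (intro add_nonneg_nonneg mult_nonneg_nonneg) auto
  moreover have "0 \<le> u" using assms u_def by simp
  ultimately show ?thesis using eq by (smt (verit) divide_nonneg_pos mult_nonneg_nonneg)
qed

lemma wbdf4_re_mult_cnj_ge:
  assumes "6/5 \<le> \<alpha>" "-1 \<le> x" "x \<le> 1"
  shows "3*(2*\<alpha>-1) * trig4_sqnorm (wbdf4_a \<alpha>) x \<le> 4*(5*\<alpha>-1) * trig4_re_mult_cnj (wbdf4_b \<alpha>) (wbdf4_a \<alpha>) x"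
proof -
  define t where "t = \<alpha> - 6/5"
  define u where "u = 1 - x"
  define v where "v = 1 + x"
  define B0 where "B0 = 1517/750+1161/25*t+426/5*t^2+116/3*t^3"
  define B1 where "B1 = 10219/750+2536/75*t+177/5*t^2+14*t^3"
  define B2 where "B2 = 79/10+7*t"
  have \<alpha>: "\<alpha> = 6/5 + t" unfolding t_def by simp
  have eq: "4*(5*\<alpha>-1) * trig4_re_mult_cnj (wbdf4_b \<alpha>) (wbdf4_a \<alpha>) x - 3*(2*\<alpha>-1) * trig4_sqnorm (wbdf4_a \<alpha>) x
      = v * (B0*u^2 + 2*B1*u * v + B2 * v^2) / 4"
    unfolding B0_def B1_def B2_def u_def v_def trig4_sqnorm_def trig4_re_mult_cnj_def
      wbdf4_a_re_im wbdf4_b_re_im \<alpha> by algebra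
  have "0 \<le> B0*u^2 + 2*B1*u * v + B2 * v^2" unfolding B0_def B1_def B2_def using assms t_def u_def v_def
    by (intro add_nonneg_nonneg mult_nonneg_nonneg) auto
  moreover have "0 \<le> v" using assms v_def by simp
  ultimately show ?thesis using eq by (smt (verit) divide_nonneg_pos mult_nonneg_nonneg)
qed

lemma wbdf4_c_sqnorm_le:
  assumes "6/5 \<le> \<alpha>" "-1 \<le> x" "x \<le> 1"
  shows "(4*(5*\<alpha>-1))^2 * trig4_sqnorm (wbdf4_c \<alpha>) x \<le> (3*(14*\<alpha>+1))^2 * trig4_sqnorm (wbdf4_a \<alpha>) x"
proof -
  define t where "t = \<alpha> - 6/5"
  define u where "u = 1 - x"
  define v where "v = 1 + x"
  define B0 where "B0 = 4956049/1250+2559968/125*t+909932/25*t^2+131808/5*t^3+6632*t^4"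
  define B1 where "B1 = 3330843/1250+931841/125*t+227719/25*t^2+27976/5*t^3+1364*t^4"
  define B2 where "B2 = 61289/50+9214/5*t+682*t^2"
  have \<alpha>: "\<alpha> = 6/5 + t" unfolding t_def by simp
  have eq: "(3*(14*\<alpha>+1))^2 * trig4_sqnorm (wbdf4_a \<alpha>) x - (4*(5*\<alpha>-1))^2 * trig4_sqnorm (wbdf4_c \<alpha>) x
      = v * (B0*u^2 + 2*B1*u * v + B2 * v^2) / 4"
    unfolding B0_def B1_def B2_def u_def v_def trig4_sqnorm_def wbdf4_a_re_im wbdf4_c_re_im \<alpha>
    by algebra
  have "0 \<le> B0*u^2 + 2*B1*u * v + B2 * v^2" unfolding B0_def B1_def B2_def using assms t_def u_def v_def
    by (intro add_nonneg_nonneg mult_nonneg_nonneg) auto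
  moreover have "0 \<le> v" using assms v_def by simp
  ultimately show ?thesis using eq by (smt (verit) divide_nonneg_pos mult_nonneg_nonneg)
qed

lemma wbdf4_symbols_trig_poly_4:
  "a_fun (wbdf4_a \<alpha>) = trig_poly 4 (wbdf4_a \<alpha>)"
  "b_fun (wbdf4_b \<alpha>) = trig_poly 4 (wbdf4_b \<alpha>)"
  "c_fun (wbdf4_c \<alpha>) = trig_poly 4 (wbdf4_c \<alpha>)"
  using trig_poly_Suc_eq[of "wbdf4_b \<alpha>" 4]
  by (simp_all add: a_fun_def b_fun_def c_fun_def kk_def wbdf4_b_def)

lemma wbdf4_symbols_at_0: "a_fun (wbdf4_a \<alpha>) 0 = 1"
  by (simp add: wbdf4_symbols_trig_poly_4 complex_eq_iff Re_Im_trig_poly_4 wbdf4_a_re_im)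

lemma wbdf4_symbols_at_pi:
  "a_fun (wbdf4_a \<alpha>) pi = of_real (4*(5*\<alpha>-1)/3)"
  "b_fun (wbdf4_b \<alpha>) pi = of_real (2*\<alpha>-1)"
  "c_fun (wbdf4_c \<alpha>) pi = of_real (14*\<alpha>+1)"
  by (simp_all add: wbdf4_symbols_trig_poly_4 complex_eq_iff Re_Im_trig_poly_4
      wbdf4_a_re_im wbdf4_b_re_im wbdf4_c_re_im)

lemma norm_wbdf4_a_ge_1:
  assumes "1 \<le> \<alpha>" shows "1 \<le> cmod (a_fun (wbdf4_a \<alpha>) \<theta>)"
proof -
  have "1 \<le> cmod (a_fun (wbdf4_a \<alpha>) \<theta>) ^ 2"
    using wbdf4_a_sqnorm_ge_1[OF assms, of "cos \<theta>"]
    by (simp add: wbdf4_symbols_trig_poly_4 norm_trig_poly_4_sq)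
  then show ?thesis by (metis norm_ge_zero one_power2 power2_le_imp_le)
qed

lemma norm_wbdf4_c_divide_a_le:
  assumes "6/5 \<le> \<alpha>"
  shows "cmod (c_fun (wbdf4_c \<alpha>) \<theta> / a_fun (wbdf4_a \<alpha>) \<theta>) \<le> 3*(14*\<alpha>+1) / (4*(5*\<alpha>-1))"
proof -
  let ?A = "cmod (a_fun (wbdf4_a \<alpha>) \<theta>)" and ?C = "cmod (c_fun (wbdf4_c \<alpha>) \<theta>)"
  have "(4*(5*\<alpha>-1) * ?C)^2 \<le> (3*(14*\<alpha>+1) * ?A)^2"
    using wbdf4_c_sqnorm_le[OF assms cos_ge_minus_one cos_le_one]
    by (simp only: power_mult_distrib wbdf4_symbols_trig_poly_4 norm_trig_poly_4_sq)
  then have "4*(5*\<alpha>-1) * ?C \<le> 3*(14*\<alpha>+1) * ?A"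
    by (rule power2_le_imp_le) (use assms in simp)
  moreover have "0 < ?A" using norm_wbdf4_a_ge_1[of \<alpha> \<theta>] assms by linarith
  ultimately show ?thesis using assms by (simp add: norm_divide divide_simps mult.commute)
qed

lemma Re_wbdf4_b_divide_a_ge:
  assumes "6/5 \<le> \<alpha>"
  shows "3*(2*\<alpha>-1) / (4*(5*\<alpha>-1)) \<le> Re (b_fun (wbdf4_b \<alpha>) \<theta> / a_fun (wbdf4_a \<alpha>) \<theta>)"
proof -
  have "1 \<le> trig4_sqnorm (wbdf4_a \<alpha>) (cos \<theta>)"
    using wbdf4_a_sqnorm_ge_1[of \<alpha> "cos \<theta>"] assms by simp
  then show ?thesis
    using wbdf4_re_mult_cnj_ge[OF assms, of "cos \<theta>"] assms
    by (simp add: wbdf4_symbols_trig_poly_4 Re_trig_poly_4_divide divide_simps mult.commute)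
qed

lemma sigma_F_wbdf4:
  assumes "1 \<le> \<alpha>" shows "sigma_F (wbdf4_a \<alpha>) = 1"
  unfolding sigma_F_def
proof (rule cSup_eq_maximum)
  show "1 \<in> (\<lambda>\<theta>. cmod (1 / a_fun (wbdf4_a \<alpha>) \<theta>)) ` {0..<2*pi}"
    using wbdf4_symbols_at_0 by (force intro: rev_image_eqI[of 0])
qed (use norm_wbdf4_a_ge_1[OF assms] in \<open>auto simp: norm_divide divide_le_eq_1\<close>)

lemma wbdf4_quotients_at_pi:
  assumes "1 \<le> \<alpha>"
  shows "cmod (c_fun (wbdf4_c \<alpha>) pi / a_fun (wbdf4_a \<alpha>) pi) = 3*(14*\<alpha>+1) / (4*(5*\<alpha>-1))"
    and "Re (b_fun (wbdf4_b \<alpha>) pi / a_fun (wbdf4_a \<alpha>) pi) = 3*(2*\<alpha>-1) / (4*(5*\<alpha>-1))"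
  unfolding wbdf4_symbols_at_pi of_real_divide[symmetric] norm_of_real Re_complex_of_real
  using assms by (simp_all add: field_simps)

lemma sigma_E_wbdf4_ge:
  assumes "1 \<le> \<alpha>" shows "3*(14*\<alpha>+1) / (4*(5*\<alpha>-1)) \<le> sigma_E (wbdf4_a \<alpha>) (wbdf4_c \<alpha>)"
  using sigma_E_ge_at[of 1 "wbdf4_a \<alpha>" pi "wbdf4_c \<alpha>"] norm_wbdf4_a_ge_1[OF assms]
    wbdf4_quotients_at_pi(1)[OF assms] assms by simp

lemma sigma_E_wbdf4:
  assumes "6/5 \<le> \<alpha>" shows "sigma_E (wbdf4_a \<alpha>) (wbdf4_c \<alpha>) = 3*(14*\<alpha>+1) / (4*(5*\<alpha>-1))"
  unfolding sigma_E_def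
proof (rule cSup_eq_maximum)
  show "3*(14*\<alpha>+1) / (4*(5*\<alpha>-1)) \<in> (\<lambda>\<theta>. cmod (c_fun (wbdf4_c \<alpha>) \<theta> / a_fun (wbdf4_a \<alpha>) \<theta>)) ` {0..<2*pi}"
    using wbdf4_quotients_at_pi(1)[of \<alpha>] assms by (force intro: rev_image_eqI[of pi])
qed (use norm_wbdf4_c_divide_a_le[OF assms] in auto)

lemma lambda_I_wbdf4_le:
  assumes "1 \<le> \<alpha>" shows "lambda_I (wbdf4_a \<alpha>) (wbdf4_b \<alpha>) \<le> 3*(2*\<alpha>-1) / (4*(5*\<alpha>-1))"
  using lambda_I_le_at[of 1 "wbdf4_a \<alpha>" pi "wbdf4_b \<alpha>"] norm_wbdf4_a_ge_1[OF assms]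
    wbdf4_quotients_at_pi(2)[OF assms] by simp

lemma lambda_I_wbdf4:
  assumes "6/5 \<le> \<alpha>" shows "lambda_I (wbdf4_a \<alpha>) (wbdf4_b \<alpha>) = 3*(2*\<alpha>-1) / (4*(5*\<alpha>-1))"
  unfolding lambda_I_def
proof (rule cInf_eq_minimum)
  show "3*(2*\<alpha>-1) / (4*(5*\<alpha>-1)) \<in> (\<lambda>\<theta>. Re (b_fun (wbdf4_b \<alpha>) \<theta> / a_fun (wbdf4_a \<alpha>) \<theta>)) ` {0..<2*pi}"
    using wbdf4_quotients_at_pi(2)[of \<alpha>] assms by (force intro: rev_image_eqI[of pi])
qed (use Re_wbdf4_b_divide_a_ge[OF assms] in auto)

theorem mainTheorem5:
  fixes \<alpha> :: real
  shows "(\<alpha> \<ge> 1 \<longrightarrow>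
            sigma_F (wbdf4_a \<alpha>) \<ge> 1 \<and>
            sigma_E (wbdf4_a \<alpha>) (wbdf4_c \<alpha>) \<ge> 3*(14*\<alpha>+1) / (4*(5*\<alpha>-1)) \<and>
            lambda_I (wbdf4_a \<alpha>) (wbdf4_b \<alpha>) \<le> 3*(2*\<alpha>-1) / (4*(5*\<alpha>-1)) \<and>
            I_IE (wbdf4_a \<alpha>) (wbdf4_b \<alpha>) (wbdf4_c \<alpha>) \<le> (2*\<alpha>-1) / (14*\<alpha>+1))
       \<and> (\<alpha> \<ge> 6/5 \<longrightarrow>
            sigma_F (wbdf4_a \<alpha>) = 1 \<and>
            sigma_E (wbdf4_a \<alpha>) (wbdf4_c \<alpha>) = 3*(14*\<alpha>+1) / (4*(5*\<alpha>-1)) \<and>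
            lambda_I (wbdf4_a \<alpha>) (wbdf4_b \<alpha>) = 3*(2*\<alpha>-1) / (4*(5*\<alpha>-1)) \<and>
            I_IE (wbdf4_a \<alpha>) (wbdf4_b \<alpha>) (wbdf4_c \<alpha>) = (2*\<alpha>-1) / (14*\<alpha>+1))"
proof -
  define S where "S = 3*(14*\<alpha>+1) / (4*(5*\<alpha>-1))"
  define L where "L = 3*(2*\<alpha>-1) / (4*(5*\<alpha>-1))"
  have ratio: "L / S = (2*\<alpha>-1) / (14*\<alpha>+1)" if "1 \<le> \<alpha>"
    using that unfolding S_def L_def by (simp add: divide_simps) (simp add: algebra_simps)
  have I_IE_le: "I_IE (wbdf4_a \<alpha>) (wbdf4_b \<alpha>) (wbdf4_c \<alpha>) \<le> L / S" if "1 \<le> \<alpha>"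
    unfolding I_IE_def S_def L_def using that
    by (intro divide_le_divide_of_bounds lambda_I_wbdf4_le sigma_E_wbdf4_ge) auto
  have I_IE_eq: "I_IE (wbdf4_a \<alpha>) (wbdf4_b \<alpha>) (wbdf4_c \<alpha>) = L / S" if "6/5 \<le> \<alpha>"
    unfolding I_IE_def S_def L_def using that by (simp add: sigma_E_wbdf4 lambda_I_wbdf4)
  show ?thesis
    using sigma_F_wbdf4 sigma_E_wbdf4_ge lambda_I_wbdf4_le I_IE_le
      sigma_E_wbdf4 lambda_I_wbdf4 I_IE_eq ratio
    unfolding S_def L_def by auto
qed

end
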